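(* Assume $r\ge n^{\kappa}$ for some sufficiently small constant $\kappa>0$ and condition (C1). If $l_n=o(n)$, then $\sup_{\omega\in[-\pi,\pi]}\max_{(i,j)\in\mathcal I}|\mathrm{I}_{i,j}(\omega)-\zeta_{i,j}(\omega)|=O_{\rm p}(l_n^2n^{-1}\log r)$.
   Context: $\{\mathbf x_t\}$ is a $p$-dimensional stationary time series with mean $\boldsymbol\mu$, $\mathring{\mathbf x}_t=\mathbf x_t-\boldsymbol\mu=(\mathring x_{1,t},\dots,\mathring x_{p,t})^\top$, $\boldsymbol\Gamma(k)=\{\gamma_{i,j}(k)\}=\mathrm{Cov}(\mathbf x_{t+k},\mathbf x_t)$, $\iota=\sqrt{-1}$. Observations $\mathbf x_1,\dots,\mathbf x_n$. Flat-top kernel with fixed $c\in(0,1]$: $\mathcal W(u)=1$ for $|u|\le c$, $(|u|-1)/(c-1)$ for $c<|u|\le1$, $0$ otherwise; integer bandwidth $l_n$ with $n>2l_n$. $\tilde{\boldsymbol\Gamma}(k)=n^{-1}\sum_{t=1}^{n-k}\mathring{\mathbf x}_{t+k}\mathring{\mathbf x}_t^\top$ for $k\ge0$ and $n^{-1}\sum_{t=-k+1}^{n}\mathring{\mathbf x}_{t+k}\mathring{\mathbf x}_t^\top$ for $k<0$. $\mathrm I(\omega)=\{\mathrm I_{i,j}(\omega)\}=(2\pi)^{-1}\sum_{k=-l_n}^{l_n}\mathcal W(k/l_n)\{\tilde{\boldsymbol\Gamma}(k)-\frac{n-|k|}{n}\boldsymbol\Gamma(k)\}e^{-\iota k\omega}$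 and $\zeta_{i,j}(\omega)=(2\pi n)^{-1}\sum_{t=l_n+1}^{n-l_n}\sum_{k=-l_n}^{l_n}\mathcal W(k/l_n)\{\mathring x_{i,t+k}\mathring x_{j,t}-\gamma_{i,j}(k)\}e^{-\iota k\omega}$. $\mathcal I\subset[p]^2$, $r=|\mathcal I|$; $p,r,l_n$ may depend on $n$, limits as $n\to\infty$. Condition (C1): there are constants $C_1>0$, $C_2>1$ independent of $n,p$ with $\mathbb E\exp(C_1|x_{j,t}|^2)\le C_2$ for all $t,j$. *)

theory Defs
  imports "HOL-Probability.Probability" "HOL-Library.Landau_Symbols"
begin

definition flat_top :: "real \<Rightarrow> real \<Rightarrow> real" where
  "flat_top c u = (if \<bar>u\<bar> \<le> c then 1
                   else if \<bar>u\<bar> \<le> 1 then (\<bar>u\<bar> - 1) / (c - 1) else 0)"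

text \<open>Sample autocovariance (based on the centred data xc t i, times 1..n).\<close>
definition gamma_tilde :: "nat \<Rightarrow> (int \<Rightarrow> nat \<Rightarrow> real) \<Rightarrow> nat \<Rightarrow> nat \<Rightarrow> int \<Rightarrow> real" where
  "gamma_tilde n xc i j k =
     (if k \<ge> 0 then (\<Sum>t\<in>{1..int n - k}. xc (t + k) i * xc t j) / real n
      else (\<Sum>t\<in>{1 - k..int n}. xc (t + k) i * xc t j) / real n)"

text \<open>The (i,j) entry of I(omega); gam i j k is the true autocovariance gamma_{i,j}(k).\<close>
definition I_stat :: "real \<Rightarrow> nat \<Rightarrow> nat \<Rightarrow> (int \<Rightarrow> nat \<Rightarrow> real)
      \<Rightarrow> (nat \<Rightarrow> nat \<Rightarrow> int \<Rightarrow> real) \<Rightarrow> nat \<Rightarrow> nat \<Rightarrow> real \<Rightarrow> complex" where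
  "I_stat c n l xc gam i j w =
     (\<Sum>k\<in>{- int l..int l}.
        complex_of_real (flat_top c (real_of_int k / real l) *
          (gamma_tilde n xc i j k - (real n - real_of_int \<bar>k\<bar>) / real n * gam i j k))
        * exp (- \<i> * complex_of_real (real_of_int k * w))) / complex_of_real (2 * pi)"

definition zeta_stat :: "real \<Rightarrow> nat \<Rightarrow> nat \<Rightarrow> (int \<Rightarrow> nat \<Rightarrow> real)
      \<Rightarrow> (nat \<Rightarrow> nat \<Rightarrow> int \<Rightarrow> real) \<Rightarrow> nat \<Rightarrow> nat \<Rightarrow> real \<Rightarrow> complex" where
  "zeta_stat c n l xc gam i j w =
     (\<Sum>t\<in>{int l + 1..int n - int l}. \<Sum>k\<in>{- int l..int l}.
        complex_of_real (flat_top c (real_of_int k / real l) *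
          (xc (t + k) i * xc t j - gam i j k))
        * exp (- \<i> * complex_of_real (real_of_int k * w))) / complex_of_real (2 * pi * real n)"

end

theory Submission
  imports Defs
begin

(*
  Both 2 pi n I(w) and 2 pi n zeta(w) are flat-top windowed sums, over the lags |k| <= l_n, of the
  centred products x_{i,t+k} x_{j,t} - gamma_{i,j}(k): for I the inner sum runs over all t with
  t, t + k in [1, n], for zeta only over the central range l_n < t <= n - l_n. Their difference thus
  consists of the 2 l_n - |k| boundary terms of each lag, so |I(w) - zeta(w)| <= l_n^2 D / n for all w,
  where D bounds the centred products. Under (C1) the means and autocovariances are bounded, and a
  union bound over the at most 2 n r pairs (t, j) shows that with probability 1 - epsilon all |x_{j,t}|
  are at most v, where exp(C1 v^2) is of order n r / epsilon. As r >= n^kappa, D = O(log r).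
*)

definition lag_range :: "nat \<Rightarrow> int \<Rightarrow> int set" where
  "lag_range n k = {t \<in> {1..int n}. t + k \<in> {1..int n}}"

lemma lag_range_eq_atLeastAtMost: "lag_range n k = {max 1 (1 - k)..min (int n) (int n - k)}"
  unfolding lag_range_def by auto

lemma gamma_tilde_eq_lag_range:
  "gamma_tilde n x i j k = (\<Sum>t\<in>lag_range n k. x (t + k) i * x t j) / real n"
  unfolding gamma_tilde_def lag_range_eq_atLeastAtMost by (simp add: max_def min_def)

lemma card_lag_range: "\<bar>k\<bar> \<le> int n \<Longrightarrow> card (lag_range n k) = n - nat \<bar>k\<bar>"
  unfolding lag_range_eq_atLeastAtMost by (simp add: max_def min_def) linarith

lemma central_range_subset_lag_range:
  "\<bar>k\<bar> \<le> int l \<Longrightarrow> {int l + 1..int n - int l} \<subseteq> lag_range n k"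
  unfolding lag_range_def by auto

lemma abs_flat_top_le_one:
  assumes "0 < c" "c \<le> 1"
  shows "\<bar>flat_top c u\<bar> \<le> 1"
proof (cases "\<bar>u\<bar> \<le> c \<or> 1 < \<bar>u\<bar>")
  case False
  then have "(\<bar>u\<bar> - 1) / (c - 1) = (1 - \<bar>u\<bar>) / (1 - c)" "c < 1"
    by (simp_all add: divide_simps) argo
  with False show ?thesis unfolding flat_top_def by (auto simp: divide_simps)
qed (auto simp: flat_top_def)

definition windowed_lag_sum ::
    "real \<Rightarrow> nat \<Rightarrow> real \<Rightarrow> (int \<Rightarrow> int set) \<Rightarrow> (int \<Rightarrow> int \<Rightarrow> real) \<Rightarrow> complex" where
  "windowed_lag_sum c l w S f =
     (\<Sum>k\<in>{- int l..int l}. complex_of_real (flat_top c (real_of_int k / real l) * (\<Sum>t\<in>S k. f t k))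
        * exp (- \<i> * complex_of_real (real_of_int k * w)))"

lemma windowed_lag_sum_diff:
  assumes "\<And>k. \<bar>k\<bar> \<le> int l \<Longrightarrow> finite (S k)" "\<And>k. \<bar>k\<bar> \<le> int l \<Longrightarrow> S' k \<subseteq> S k"
  shows "windowed_lag_sum c l w S f - windowed_lag_sum c l w S' f
       = windowed_lag_sum c l w (\<lambda>k. S k - S' k) f"
  unfolding windowed_lag_sum_def sum_subtractf[symmetric]
  by (intro sum.cong refl) (simp add: sum_diff assms abs_le_iff right_diff_distrib left_diff_distrib)

lemma norm_windowed_lag_sum_le:
  assumes "0 < c" "c \<le> 1" "0 \<le> D"
    and card: "\<And>k. \<bar>k\<bar> \<le> int l \<Longrightarrow> card (S k) \<le> m"
    and bound: "\<And>k t. \<bar>k\<bar> \<le> int l \<Longrightarrow> t \<in> S k \<Longrightarrow> \<bar>f t k\<bar> \<le> D"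
  shows "cmod (windowed_lag_sum c l w S f) \<le> (2 * real l + 1) * real m * D"
proof -
  have term_le: "cmod (complex_of_real (flat_top c (real_of_int k / real l) * (\<Sum>t\<in>S k. f t k))
        * exp (- \<i> * complex_of_real (real_of_int k * w))) \<le> real m * D"
    if k: "k \<in> {- int l..int l}" for k
  proof -
    have "\<bar>\<Sum>t\<in>S k. f t k\<bar> \<le> (\<Sum>t\<in>S k. \<bar>f t k\<bar>)" by (rule sum_abs)
    also have "\<dots> \<le> real (card (S k)) * D"
      using bound k by (intro sum_bounded_above) auto
    also have "\<dots> \<le> real m * D"
      using card[of k] k \<open>0 \<le> D\<close> by (auto intro: mult_right_mono)
    finally have sum_le: "\<bar>\<Sum>t\<in>S k. f t k\<bar> \<le> real m * D" .
    have "cmod (exp (- \<i> * complex_of_real (real_of_int k * w))) = 1"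
      by simp
    then have "cmod (complex_of_real (flat_top c (real_of_int k / real l) * (\<Sum>t\<in>S k. f t k))
        * exp (- \<i> * complex_of_real (real_of_int k * w)))
        = \<bar>flat_top c (real_of_int k / real l)\<bar> * \<bar>\<Sum>t\<in>S k. f t k\<bar>"
      by (simp only: norm_mult norm_of_real abs_mult mult_1_right)
    also have "\<dots> \<le> 1 * \<bar>\<Sum>t\<in>S k. f t k\<bar>"
      using abs_flat_top_le_one[OF assms(1,2)] by (intro mult_right_mono) auto
    finally show ?thesis using sum_le by simp
  qed
  have "cmod (windowed_lag_sum c l w S f) \<le> (\<Sum>k\<in>{- int l..int l}. real m * D)"
    unfolding windowed_lag_sum_def by (rule order.trans[OF norm_sum sum_mono]) (rule term_le)
  also have "\<dots> = (2 * real l + 1) * real m * D" by simp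
  finally show ?thesis .
qed

lemma I_stat_eq_windowed_lag_sum:
  assumes "0 < n" "l \<le> n"
  shows "I_stat c n l x gam i j w
       = windowed_lag_sum c l w (lag_range n) (\<lambda>t k. x (t + k) i * x t j - gam i j k)
         / complex_of_real (2 * pi * real n)"
  unfolding I_stat_def windowed_lag_sum_def sum_divide_distrib
proof (intro sum.cong refl)
  fix k assume "k \<in> {- int l..int l}"
  then have "\<bar>k\<bar> \<le> int n" using assms by auto
  then have card: "real (card (lag_range n k)) = real n - real_of_int \<bar>k\<bar>"
    by (simp add: card_lag_range)
  have "gamma_tilde n x i j k - (real n - real_of_int \<bar>k\<bar>) / real n * gam i j k
      = (\<Sum>t\<in>lag_range n k. x (t + k) i * x t j - gam i j k) / real n"
    unfolding gamma_tilde_eq_lag_range sum_subtractf card[symmetric]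
    by (simp add: diff_divide_distrib)
  then show "complex_of_real (flat_top c (real_of_int k / real l) *
          (gamma_tilde n x i j k - (real n - real_of_int \<bar>k\<bar>) / real n * gam i j k))
        * exp (- \<i> * complex_of_real (real_of_int k * w)) / complex_of_real (2 * pi)
      = complex_of_real (flat_top c (real_of_int k / real l) *
          (\<Sum>t\<in>lag_range n k. x (t + k) i * x t j - gam i j k))
        * exp (- \<i> * complex_of_real (real_of_int k * w)) / complex_of_real (2 * pi * real n)"
    by (simp add: field_simps)
qed

lemma zeta_stat_eq_windowed_lag_sum:
  "zeta_stat c n l x gam i j w
     = windowed_lag_sum c l w (\<lambda>k. {int l + 1..int n - int l}) (\<lambda>t k. x (t + k) i * x t j - gam i j k)
       / complex_of_real (2 * pi * real n)"
  unfolding zeta_stat_def windowed_lag_sum_def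
  by (subst sum.swap) (simp add: sum_distrib_left sum_distrib_right)

lemma norm_I_stat_minus_zeta_stat_le:
  assumes c: "0 < c" "c \<le> 1" and n: "0 < n" "2 * l \<le> n" and "0 \<le> D"
    and bound: "\<And>t k. t \<in> {1..int n} \<Longrightarrow> t + k \<in> {1..int n} \<Longrightarrow>
        \<bar>x (t + k) i * x t j - gam i j k\<bar> \<le> D"
  shows "cmod (I_stat c n l x gam i j w - zeta_stat c n l x gam i j w) \<le> real l ^ 2 * D / real n"
proof -
  define C where "C = {int l + 1..int n - int l}"
  define f where "f t k = x (t + k) i * x t j - gam i j k" for t k
  have card_edge: "card (lag_range n k - C) \<le> 2 * l" if "\<bar>k\<bar> \<le> int l" for k
  proof -
    have "C \<subseteq> lag_range n k" using that unfolding C_def by (rule central_range_subset_lag_range)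
    then have "card (lag_range n k - C) = card (lag_range n k) - card C"
      by (simp add: card_Diff_subset finite_subset lag_range_eq_atLeastAtMost)
    also have "\<dots> = (n - nat \<bar>k\<bar>) - (n - 2 * l)"
      using that n by (simp add: card_lag_range C_def)
    finally show ?thesis by linarith
  qed
  have "l \<le> n" using n by linarith
  have "I_stat c n l x gam i j w - zeta_stat c n l x gam i j w
      = windowed_lag_sum c l w (\<lambda>k. lag_range n k - C) f / complex_of_real (2 * pi * real n)"
    using n unfolding I_stat_eq_windowed_lag_sum[OF n(1) \<open>l \<le> n\<close>] zeta_stat_eq_windowed_lag_sum
      f_def[symmetric] C_def[symmetric] diff_divide_distrib[symmetric]
    by (subst windowed_lag_sum_diff) (auto simp: lag_range_eq_atLeastAtMost C_def)
  also have "cmod \<dots> = cmod (windowed_lag_sum c l w (\<lambda>k. lag_range n k - C) f) / (2 * pi * real n)"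
    unfolding norm_divide norm_of_real by simp
  also have "\<dots> \<le> (2 * real l + 1) * real (2 * l) * D / (2 * pi * real n)"
    using n by (intro divide_right_mono norm_windowed_lag_sum_le c \<open>0 \<le> D\<close> card_edge)
       (auto simp: f_def lag_range_def intro: bound)
  also have "\<dots> \<le> real l ^ 2 * D / real n"
  proof -
    have "(2 * real l + 1) * real (2 * l) \<le> 6 * real l ^ 2"
      by (cases "l = 0") (auto simp: power2_eq_square algebra_simps)
    also have "\<dots> \<le> 2 * pi * real l ^ 2"
      using pi_gt3 by (intro mult_right_mono) auto
    finally have "(2 * real l + 1) * real (2 * l) * D \<le> 2 * pi * real l ^ 2 * D"
      using \<open>0 \<le> D\<close> by (rule mult_right_mono)
    then show ?thesis
      using n by (simp add: divide_simps mult_ac)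
  qed
  finally show ?thesis .
qed

lemma square_le_exp_square_div:
  fixes x C :: real
  assumes "0 < C"
  shows "x\<^sup>2 \<le> exp (C * x\<^sup>2) / C"
proof -
  have "C * x\<^sup>2 \<le> exp (C * x\<^sup>2)" using exp_ge_add_one_self[of "C * x\<^sup>2"] by linarith
  with assms show ?thesis by (simp add: pos_le_divide_eq mult.commute)
qed

lemma abs_integral_le_of_exp_square_moments:
  fixes g h1 h2 :: "'a \<Rightarrow> real"
  assumes "prob_space M"
    and [measurable]: "h1 \<in> borel_measurable M" "h2 \<in> borel_measurable M"
    and "0 < C1" "0 \<le> C2" "0 \<le> a" "0 \<le> b"
    and moment1: "(\<integral>\<^sup>+ s. ennreal (exp (C1 * (h1 s)\<^sup>2)) \<partial>M) \<le> ennreal C2"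
    and moment2: "(\<integral>\<^sup>+ s. ennreal (exp (C1 * (h2 s)\<^sup>2)) \<partial>M) \<le> ennreal C2"
    and dominated: "\<And>s. s \<in> space M \<Longrightarrow> \<bar>g s\<bar> \<le> a + b * ((h1 s)\<^sup>2 + (h2 s)\<^sup>2)"
  shows "\<bar>integral\<^sup>L M g\<bar> \<le> a + 2 * b * C2 / C1"
proof -
  interpret prob_space M by fact
  define e1 where "e1 s = exp (C1 * (h1 s)\<^sup>2)" for s
  define e2 where "e2 s = exp (C1 * (h2 s)\<^sup>2)" for s
  have [measurable]: "e1 \<in> borel_measurable M" "e2 \<in> borel_measurable M"
    unfolding e1_def e2_def by measurable
  have "(\<integral>\<^sup>+ s. ennreal \<bar>g s\<bar> \<partial>M)
      \<le> (\<integral>\<^sup>+ s. ennreal a + ennreal (b / C1) * ennreal (e1 s) + ennreal (b / C1) * ennreal (e2 s) \<partial>M)"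
  proof (intro nn_integral_mono)
    fix s assume "s \<in> space M"
    have "b * ((h1 s)\<^sup>2 + (h2 s)\<^sup>2) \<le> b * (e1 s / C1 + e2 s / C1)"
      unfolding e1_def e2_def using \<open>0 < C1\<close> \<open>0 \<le> b\<close>
      by (intro mult_left_mono add_mono square_le_exp_square_div) auto
    with dominated[OF \<open>s \<in> space M\<close>]
    have "\<bar>g s\<bar> \<le> a + b / C1 * e1 s + b / C1 * e2 s" by (simp add: field_simps)
    then show "ennreal \<bar>g s\<bar> \<le> ennreal a + ennreal (b / C1) * ennreal (e1 s) + ennreal (b / C1) * ennreal (e2 s)"
      using \<open>0 < C1\<close> \<open>0 \<le> a\<close> \<open>0 \<le> b\<close>
      by (simp add: e1_def e2_def ennreal_leI flip: ennreal_plus ennreal_mult)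
  qed
  also have "\<dots> = ennreal a + ennreal (b / C1) * (\<integral>\<^sup>+ s. ennreal (e1 s) \<partial>M)
      + ennreal (b / C1) * (\<integral>\<^sup>+ s. ennreal (e2 s) \<partial>M)"
    by (simp add: nn_integral_add nn_integral_cmult emeasure_space_1)
  also have "\<dots> \<le> ennreal a + ennreal (b / C1) * ennreal C2 + ennreal (b / C1) * ennreal C2"
    using moment1 moment2 unfolding e1_def e2_def by (intro add_mono mult_left_mono) auto
  also have "\<dots> = ennreal (a + 2 * b * C2 / C1)"
    using \<open>0 < C1\<close> \<open>0 \<le> C2\<close> \<open>0 \<le> a\<close> \<open>0 \<le> b\<close>
    by (simp flip: ennreal_plus ennreal_mult add: field_simps)
  finally have "integral\<^sup>L M (\<lambda>s. \<bar>g s\<bar>) \<le> a + 2 * b * C2 / C1"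
    using \<open>0 < C1\<close> \<open>0 \<le> C2\<close> \<open>0 \<le> a\<close> \<open>0 \<le> b\<close> by (intro integral_real_bounded) auto
  then show ?thesis
    using integral_abs_bound[of M g] by linarith
qed

lemma abs_mean_le_of_exp_square_moment:
  fixes f :: "'a \<Rightarrow> real"
  assumes "prob_space M" "f \<in> borel_measurable M" "0 < C1" "0 \<le> C2"
    and "(\<integral>\<^sup>+ s. ennreal (exp (C1 * (f s)\<^sup>2)) \<partial>M) \<le> ennreal C2"
  shows "\<bar>integral\<^sup>L M f\<bar> \<le> 1 + C2 / C1"
proof -
  have "\<bar>x\<bar> \<le> 1 + 1 / 2 * (x\<^sup>2 + x\<^sup>2)" for x :: real
    using sum_squares_bound[of "\<bar>x\<bar>" 1] by simp
  then have "\<bar>integral\<^sup>L M f\<bar> \<le> 1 + 2 * (1 / 2) * C2 / C1"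
    using assms by (intro abs_integral_le_of_exp_square_moments) auto
  then show ?thesis by simp
qed

lemma abs_covariance_le_of_exp_square_moments:
  fixes f g :: "'a \<Rightarrow> real"
  assumes "prob_space M" "f \<in> borel_measurable M" "g \<in> borel_measurable M"
    and "0 < C1" "0 \<le> C2"
    and "(\<integral>\<^sup>+ s. ennreal (exp (C1 * (f s)\<^sup>2)) \<partial>M) \<le> ennreal C2"
    and "(\<integral>\<^sup>+ s. ennreal (exp (C1 * (g s)\<^sup>2)) \<partial>M) \<le> ennreal C2"
    and "\<bar>u\<bar> \<le> m" "\<bar>w\<bar> \<le> m"
  shows "\<bar>integral\<^sup>L M (\<lambda>s. (f s - u) * (g s - w))\<bar> \<le> 2 * m\<^sup>2 + 2 * C2 / C1"
proof -
  have dominated: "\<bar>(x - u) * (y - w)\<bar> \<le> 2 * m\<^sup>2 + 1 * (x\<^sup>2 + y\<^sup>2)" for x y :: real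
  proof -
    have "2 * \<bar>(x - u) * (y - w)\<bar> \<le> (x - u)\<^sup>2 + (y - w)\<^sup>2"
      using sum_squares_bound[of "\<bar>x - u\<bar>" "\<bar>y - w\<bar>"] by (simp add: abs_mult)
    also have "\<dots> \<le> 2 * x\<^sup>2 + 2 * u\<^sup>2 + 2 * y\<^sup>2 + 2 * w\<^sup>2"
      using sum_squares_bound[of x "- u"] sum_squares_bound[of y "- w"] by (simp add: power2_diff)
    also have "\<dots> \<le> 2 * x\<^sup>2 + 2 * m\<^sup>2 + 2 * y\<^sup>2 + 2 * m\<^sup>2"
      using power_mono[OF assms(8) abs_ge_zero, of 2] power_mono[OF assms(9) abs_ge_zero, of 2] by simp
    finally show ?thesis by simp
  qed
  have "\<bar>integral\<^sup>L M (\<lambda>s. (f s - u) * (g s - w))\<bar> \<le> 2 * m\<^sup>2 + 2 * 1 * C2 / C1"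
    by (rule abs_integral_le_of_exp_square_moments[OF assms(1-5) _ _ assms(6,7) dominated]) auto
  then show ?thesis by simp
qed

lemma measure_abs_gt_le_exp_square_moment:
  fixes f :: "'a \<Rightarrow> real"
  assumes [measurable]: "f \<in> borel_measurable M"
    and "0 < C1" "0 \<le> v" "0 \<le> C2"
    and moment: "(\<integral>\<^sup>+ s. ennreal (exp (C1 * (f s)\<^sup>2)) \<partial>M) \<le> ennreal C2"
  shows "measure M {s \<in> space M. v < \<bar>f s\<bar>} \<le> C2 / exp (C1 * v\<^sup>2)"
proof -
  have "{s \<in> space M. v < \<bar>f s\<bar>} \<subseteq> {s \<in> space M. v\<^sup>2 \<le> (f s)\<^sup>2}"
    using \<open>0 \<le> v\<close> by (auto simp: abs_le_square_iff[symmetric])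
  then have "emeasure M {s \<in> space M. v < \<bar>f s\<bar>} \<le> emeasure M {s \<in> space M. v\<^sup>2 \<le> (f s)\<^sup>2}"
    by (intro emeasure_mono) measurable
  also have "\<dots> \<le> ennreal (exp (- C1 * v\<^sup>2)) *
      (\<integral>\<^sup>+ s. ennreal (exp (C1 * (f s)\<^sup>2)) * indicator (space M) s \<partial>M)"
    using \<open>0 < C1\<close> by (intro Chernoff_ineq_nn_integral_ge) auto
  also have "(\<integral>\<^sup>+ s. ennreal (exp (C1 * (f s)\<^sup>2)) * indicator (space M) s \<partial>M)
      = (\<integral>\<^sup>+ s. ennreal (exp (C1 * (f s)\<^sup>2)) \<partial>M)"
    by (intro nn_integral_cong) simp
  also have "ennreal (exp (- C1 * v\<^sup>2)) * \<dots> \<le> ennreal (exp (- C1 * v\<^sup>2)) * ennreal C2"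
    using moment by (rule mult_left_mono) simp
  also have "\<dots> = ennreal (C2 / exp (C1 * v\<^sup>2))"
    using \<open>0 \<le> C2\<close> by (simp add: ennreal_mult'[symmetric] exp_minus field_simps)
  finally show ?thesis
    using \<open>0 \<le> C2\<close> by (simp add: measure_def enn2real_leI)
qed

lemma obtain_event_uniform_abs_le:
  fixes f :: "'i \<Rightarrow> 'a \<Rightarrow> real"
  assumes "prob_space M" "finite Q"
    and meas: "\<And>q. q \<in> Q \<Longrightarrow> f q \<in> borel_measurable M"
    and moment: "\<And>q. q \<in> Q \<Longrightarrow> (\<integral>\<^sup>+ s. ennreal (exp (C1 * (f q s)\<^sup>2)) \<partial>M) \<le> ennreal C2"
    and "0 < C1" "0 \<le> C2" "0 \<le> v"
  obtains A where "A \<in> sets M" "1 - real (card Q) * C2 / exp (C1 * v\<^sup>2) \<le> measure M A"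
    "\<And>s q. s \<in> A \<Longrightarrow> q \<in> Q \<Longrightarrow> \<bar>f q s\<bar> \<le> v"
proof
  interpret prob_space M by fact
  define Bad where "Bad q = {s \<in> space M. v < \<bar>f q s\<bar>}" for q
  have Bad_sets: "Bad q \<in> sets M" if "q \<in> Q" for q
    unfolding Bad_def using meas[OF that] by measurable
  have "measure M (\<Union>q\<in>Q. Bad q) \<le> (\<Sum>q\<in>Q. measure M (Bad q))"
    using \<open>finite Q\<close> Bad_sets by (rule measure_UNION_le)
  also have "\<dots> \<le> (\<Sum>q\<in>Q. C2 / exp (C1 * v\<^sup>2))"
    unfolding Bad_def using meas moment assms(5-7)
    by (intro sum_mono measure_abs_gt_le_exp_square_moment) auto
  finally show "1 - real (card Q) * C2 / exp (C1 * v\<^sup>2) \<le> measure M (space M - (\<Union>q\<in>Q. Bad q))"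
    using \<open>finite Q\<close> Bad_sets by (subst prob_compl) auto
  show "space M - (\<Union>q\<in>Q. Bad q) \<in> sets M"
    using \<open>finite Q\<close> Bad_sets by auto
  show "\<bar>f q s\<bar> \<le> v" if "s \<in> space M - (\<Union>q\<in>Q. Bad q)" "q \<in> Q" for s q
    using that unfolding Bad_def by auto
qed

lemma obtain_truncation_level:
  fixes n r \<kappa> a C \<epsilon> K :: real
  assumes "0 < a" "0 < C" "0 < \<epsilon>" "0 < \<kappa>" "0 \<le> K" "1 \<le> n" "2 \<le> r" "\<kappa> * ln n \<le> ln r"
  obtains v where "0 \<le> v" "2 * n * r * C / exp (a * v\<^sup>2) \<le> \<epsilon>"
    "2 * v\<^sup>2 + K \<le> (2 * (\<bar>ln (2 * C / \<epsilon>)\<bar> / ln 2 + 1 / \<kappa> + 1) / a + K / ln 2) * ln r"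
proof
  define L where "L = \<bar>ln (2 * C / \<epsilon>)\<bar>"
  define v where "v = sqrt ((L + ln n + ln r) / a)"
  have "0 \<le> L" "0 \<le> ln n" "0 \<le> ln r" "ln 2 \<le> ln r"
    using assms(6,7) unfolding L_def by auto
  then have "0 \<le> (L + ln n + ln r) / a"
    using \<open>0 < a\<close> by simp
  then have v2: "v\<^sup>2 = (L + ln n + ln r) / a"
    unfolding v_def by simp
  show "0 \<le> v"
    unfolding v_def using \<open>0 \<le> (L + ln n + ln r) / a\<close> by simp
  have "2 * C / \<epsilon> = exp (ln (2 * C / \<epsilon>))" using assms(2,3) by simp
  also have "\<dots> \<le> exp L" unfolding L_def by simp
  also have "\<dots> = exp (a * v\<^sup>2) / (n * r)"
    using assms(1,6,7) by (simp add: v2 exp_add)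
  finally show "2 * n * r * C / exp (a * v\<^sup>2) \<le> \<epsilon>"
    using assms(3,6,7) by (simp add: field_simps)
  have "L \<le> L / ln 2 * ln r"
    using mult_left_mono[OF \<open>ln 2 \<le> ln r\<close>, of "L / ln 2"] \<open>0 \<le> L\<close> by simp
  moreover have "ln n \<le> 1 / \<kappa> * ln r"
    using assms(4,8) by (simp add: field_simps)
  ultimately have "L + ln n + ln r \<le> (L / ln 2 + 1 / \<kappa> + 1) * ln r"
    by (simp add: distrib_right)
  then have "2 * v\<^sup>2 \<le> 2 * ((L / ln 2 + 1 / \<kappa> + 1) * ln r / a)"
    unfolding v2 using \<open>0 < a\<close> by (intro mult_left_mono divide_right_mono) auto
  moreover have "K \<le> K / ln 2 * ln r"
    using mult_left_mono[OF \<open>ln 2 \<le> ln r\<close>, of "K / ln 2"] \<open>0 \<le> K\<close> by simp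
  ultimately show "2 * v\<^sup>2 + K \<le> (2 * (\<bar>ln (2 * C / \<epsilon>)\<bar> / ln 2 + 1 / \<kappa> + 1) / a + K / ln 2) * ln r"
    unfolding L_def[symmetric] by (simp add: algebra_simps)
qed

lemma mult_ln_le_ln_of_powr_le:
  fixes x y \<kappa> :: real
  assumes "0 < x" "x powr \<kappa> \<le> y"
  shows "\<kappa> * ln x \<le> ln y"
proof -
  have "\<kappa> * ln x = ln (x powr \<kappa>)" using \<open>0 < x\<close> by simp
  also have "\<dots> \<le> ln y" using \<open>0 < x\<close> assms(2) by (intro ln_mono) auto
  finally show ?thesis .
qed

context
  fixes M :: "'a measure" and X :: "int \<Rightarrow> nat \<Rightarrow> 'a \<Rightarrow> real" and \<I> :: "(nat \<times> nat) set"
    and p n l :: nat and \<mu> :: "nat \<Rightarrow> real" and \<gamma> :: "nat \<Rightarrow> nat \<Rightarrow> int \<Rightarrow> real"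
    and c C1 C2 m G :: real
  assumes prob: "prob_space M" and finite_\<I>: "finite \<I>" and \<I>_sub: "\<I> \<subseteq> {..<p} \<times> {..<p}"
    and meas: "\<And>t j. j < p \<Longrightarrow> X t j \<in> borel_measurable M"
    and moment: "\<And>t j. j < p \<Longrightarrow> (\<integral>\<^sup>+ s. ennreal (exp (C1 * (X t j s)\<^sup>2)) \<partial>M) \<le> ennreal C2"
    and C1: "0 < C1" and C2: "0 < C2"
    and mean: "\<And>j. j < p \<Longrightarrow> \<bar>\<mu> j\<bar> \<le> m"
    and cov: "\<And>i j k. i < p \<Longrightarrow> j < p \<Longrightarrow> \<bar>\<gamma> i j k\<bar> \<le> G" and G: "0 \<le> G"
    and c: "0 < c" "c \<le> 1" and n: "0 < n" "2 * l \<le> n"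
begin

lemma I_stat_minus_zeta_stat_high_probability:
  assumes "0 \<le> v"
  obtains A where "A \<in> sets M" "1 - real (2 * n * card \<I>) * C2 / exp (C1 * v\<^sup>2) \<le> measure M A"
    "\<And>s w i j. s \<in> A \<Longrightarrow> (i, j) \<in> \<I> \<Longrightarrow>
       cmod (I_stat c n l (\<lambda>t i. X t i s - \<mu> i) \<gamma> i j w - zeta_stat c n l (\<lambda>t i. X t i s - \<mu> i) \<gamma> i j w)
       \<le> real l ^ 2 * ((v + m)\<^sup>2 + G) / real n"
proof -
  define J where "J = fst ` \<I> \<union> snd ` \<I>"
  define Q where "Q = {1..int n} \<times> J"
  have J_less: "j < p" if "j \<in> J" for j
    using that \<I>_sub unfolding J_def by auto
  have "card J \<le> card (fst ` \<I>) + card (snd ` \<I>)"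
    unfolding J_def by (rule card_Un_le)
  also have "\<dots> \<le> 2 * card \<I>"
    using card_image_le[OF finite_\<I>, of fst] card_image_le[OF finite_\<I>, of snd] by linarith
  finally have card_Q: "card Q \<le> 2 * n * card \<I>"
    unfolding Q_def card_cartesian_product by simp
  have "finite Q" unfolding Q_def J_def using finite_\<I> by simp
  obtain A where A: "A \<in> sets M" "1 - real (card Q) * C2 / exp (C1 * v\<^sup>2) \<le> measure M A"
    and small: "\<And>s q. s \<in> A \<Longrightarrow> q \<in> Q \<Longrightarrow> \<bar>X (fst q) (snd q) s\<bar> \<le> v"
    by (rule obtain_event_uniform_abs_le[where f = "\<lambda>q. X (fst q) (snd q)",
          OF prob \<open>finite Q\<close> _ _ C1 less_imp_le[OF C2] \<open>0 \<le> v\<close>])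
       (auto simp: Q_def intro!: meas moment J_less)
  show ?thesis
  proof
    show "A \<in> sets M" by fact
    have "real (card Q) * C2 / exp (C1 * v\<^sup>2) \<le> real (2 * n * card \<I>) * C2 / exp (C1 * v\<^sup>2)"
      using of_nat_mono[OF card_Q] C2 by (intro divide_right_mono mult_right_mono) auto
    with A(2) show "1 - real (2 * n * card \<I>) * C2 / exp (C1 * v\<^sup>2) \<le> measure M A" by linarith
  next
    fix s w i j assume s: "s \<in> A" and ij: "(i, j) \<in> \<I>"
    have centred: "\<bar>X t a s - \<mu> a\<bar> \<le> v + m" if "t \<in> {1..int n}" "a \<in> J" for t a
      using small[OF s, of "(t, a)"] mean[OF J_less[OF \<open>a \<in> J\<close>]] that unfolding Q_def by force
    have "i \<in> J" "j \<in> J" using ij unfolding J_def by force+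
    show "cmod (I_stat c n l (\<lambda>t i. X t i s - \<mu> i) \<gamma> i j w
        - zeta_stat c n l (\<lambda>t i. X t i s - \<mu> i) \<gamma> i j w) \<le> real l ^ 2 * ((v + m)\<^sup>2 + G) / real n"
    proof (rule norm_I_stat_minus_zeta_stat_le[OF c n])
      show "0 \<le> (v + m)\<^sup>2 + G" using G by simp
      fix t k assume "t \<in> {1..int n}" "t + k \<in> {1..int n}"
      then have xi: "\<bar>X (t + k) i s - \<mu> i\<bar> \<le> v + m" and "\<bar>X t j s - \<mu> j\<bar> \<le> v + m"
        using centred \<open>i \<in> J\<close> \<open>j \<in> J\<close> by auto
      then have "\<bar>(X (t + k) i s - \<mu> i) * (X t j s - \<mu> j)\<bar> \<le> (v + m) * (v + m)"
        unfolding abs_mult by (intro mult_mono) (auto intro: order.trans[OF abs_ge_zero xi])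
      then show "\<bar>(X (t + k) i s - \<mu> i) * (X t j s - \<mu> j) - \<gamma> i j k\<bar> \<le> (v + m)\<^sup>2 + G"
        using cov[OF J_less J_less, OF \<open>i \<in> J\<close> \<open>j \<in> J\<close>, of k] by (simp add: power2_eq_square)
    qed
  qed
qed

lemma I_stat_minus_zeta_stat_log_bound:
  fixes \<epsilon> \<kappa> :: real
  assumes "0 < \<epsilon>" "0 < \<kappa>" "2 \<le> real (card \<I>)" "\<kappa> * ln (real n) \<le> ln (real (card \<I>))"
  shows "\<exists>A\<in>sets M. 1 - \<epsilon> \<le> measure M A \<and> (\<forall>s\<in>A. \<forall>w. \<forall>(i, j)\<in>\<I>.
     cmod (I_stat c n l (\<lambda>t i. X t i s - \<mu> i) \<gamma> i j w - zeta_stat c n l (\<lambda>t i. X t i s - \<mu> i) \<gamma> i j w)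
     \<le> (2 * (\<bar>ln (2 * C2 / \<epsilon>)\<bar> / ln 2 + 1 / \<kappa> + 1) / C1 + (2 * m\<^sup>2 + G) / ln 2)
        * (real l ^ 2 * ln (real (card \<I>)) / real n))"
    (is "\<exists>A\<in>sets M. _ \<and> (\<forall>s\<in>A. \<forall>w. \<forall>(i, j)\<in>\<I>. _ \<le> ?B * _)")
proof -
  obtain v where "0 \<le> v" and prob_small: "2 * real n * real (card \<I>) * C2 / exp (C1 * v\<^sup>2) \<le> \<epsilon>"
    and level: "2 * v\<^sup>2 + (2 * m\<^sup>2 + G) \<le> ?B * ln (real (card \<I>))"
    by (rule obtain_truncation_level[where K = "2 * m\<^sup>2 + G", OF C1 C2 assms(1,2) _ _ assms(3,4)]) (use G n in simp_all)
  obtain A where A: "A \<in> sets M" "1 - real (2 * n * card \<I>) * C2 / exp (C1 * v\<^sup>2) \<le> measure M A"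
    and close: "\<And>s w i j. s \<in> A \<Longrightarrow> (i, j) \<in> \<I> \<Longrightarrow>
       cmod (I_stat c n l (\<lambda>t i. X t i s - \<mu> i) \<gamma> i j w - zeta_stat c n l (\<lambda>t i. X t i s - \<mu> i) \<gamma> i j w)
       \<le> real l ^ 2 * ((v + m)\<^sup>2 + G) / real n"
    using I_stat_minus_zeta_stat_high_probability[OF \<open>0 \<le> v\<close>] by blast
  have "(v + m)\<^sup>2 + G \<le> ?B * ln (real (card \<I>))"
    using level sum_squares_bound[of v m] by (simp add: power2_sum)
  then have "real l ^ 2 * ((v + m)\<^sup>2 + G) / real n \<le> real l ^ 2 * (?B * ln (real (card \<I>))) / real n"
    by (intro divide_right_mono mult_left_mono) auto
  then have "real l ^ 2 * ((v + m)\<^sup>2 + G) / real n \<le> ?B * (real l ^ 2 * ln (real (card \<I>)) / real n)"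
    by (simp add: ac_simps)
  moreover have "1 - \<epsilon> \<le> measure M A" using A(2) prob_small by simp
  ultimately show ?thesis
    using A(1) by (blast intro: order.trans close)
qed

end

theorem lemmaL2:
  fixes M :: "'a measure"
    and X :: "nat \<Rightarrow> int \<Rightarrow> nat \<Rightarrow> 'a \<Rightarrow> real"
    and p l :: "nat \<Rightarrow> nat"
    and \<I> :: "nat \<Rightarrow> (nat \<times> nat) set"
    and \<mu> :: "nat \<Rightarrow> nat \<Rightarrow> real"
    and \<gamma> :: "nat \<Rightarrow> nat \<Rightarrow> nat \<Rightarrow> int \<Rightarrow> real"
    and c \<kappa> C1 C2 :: real
  assumes P: "prob_space M"
    and meas: "\<And>n t j. j < p n \<Longrightarrow> X n t j \<in> borel_measurable M"
    and mean: "\<And>n t j. j < p n \<Longrightarrow> prob_space.expectation M (X n t j) = \<mu> n j"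
    and cov: "\<And>n t k i j. i < p n \<Longrightarrow> j < p n \<Longrightarrow>
        prob_space.expectation M (\<lambda>s. (X n (t + k) i s - \<mu> n i) * (X n t j s - \<mu> n j)) = \<gamma> n i j k"
    and c: "0 < c" "c \<le> 1"
    and bw: "\<And>n. 0 < n \<Longrightarrow> 2 * l n < n"
    and lo: "(\<lambda>n. real (l n)) \<in> o(\<lambda>n. real n)"
    and Isub: "\<And>n. \<I> n \<subseteq> {..<p n} \<times> {..<p n}"
    and kappa: "0 < \<kappa>"
    and rbig: "\<And>n. real (card (\<I> n)) \<ge> real n powr \<kappa>"
    and C1: "0 < C1" "1 < C2"
        "\<And>n t j. j < p n \<Longrightarrow> (\<integral>\<^sup>+ s. ennreal (exp (C1 * (X n t j s)\<^sup>2)) \<partial>M) \<le> ennreal C2"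
  shows "\<forall>\<epsilon>>0. \<exists>B N. \<forall>n\<ge>N. \<exists>A\<in>sets M. prob_space.prob M A \<ge> 1 - \<epsilon> \<and>
           (\<forall>s\<in>A. \<forall>w\<in>{-pi..pi}. \<forall>(i,j)\<in>\<I> n.
              cmod (I_stat c n (l n) (\<lambda>t i. X n t i s - \<mu> n i) (\<gamma> n) i j w
                    - zeta_stat c n (l n) (\<lambda>t i. X n t i s - \<mu> n i) (\<gamma> n) i j w)
              \<le> B * (real (l n) ^ 2 * ln (real (card (\<I> n))) / real n))"
proof (intro allI impI)
  fix \<epsilon> :: real assume "0 < \<epsilon>"
  have "0 < C2" "0 \<le> C2" using C1(2) by simp_all
  define m where "m = 1 + C2 / C1"
  define G where "G = 2 * m\<^sup>2 + 2 * C2 / C1"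
  define B where "B = 2 * (\<bar>ln (2 * C2 / \<epsilon>)\<bar> / ln 2 + 1 / \<kappa> + 1) / C1 + (2 * m\<^sup>2 + G) / ln 2"
  have mean_le: "\<bar>\<mu> n j\<bar> \<le> m" if "j < p n" for n j
    using abs_mean_le_of_exp_square_moment[OF P meas[OF that] C1(1) \<open>0 \<le> C2\<close> C1(3)[OF that]]
      mean[OF that] unfolding m_def by simp
  have cov_le: "\<bar>\<gamma> n i j k\<bar> \<le> G" if "i < p n" "j < p n" for n i j k
    using abs_covariance_le_of_exp_square_moments[OF P meas[OF that(1), of k] meas[OF that(2), of 0]
        C1(1) \<open>0 \<le> C2\<close> C1(3)[OF that(1), of k] C1(3)[OF that(2), of 0]
        mean_le[OF that(1)] mean_le[OF that(2)]]
      cov[OF that, of 0 k] unfolding G_def by simp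
  have "0 \<le> G" unfolding G_def using C1(1) \<open>0 \<le> C2\<close> by simp
  show "\<exists>B N. \<forall>n\<ge>N. \<exists>A\<in>sets M. prob_space.prob M A \<ge> 1 - \<epsilon> \<and>
           (\<forall>s\<in>A. \<forall>w\<in>{-pi..pi}. \<forall>(i,j)\<in>\<I> n.
              cmod (I_stat c n (l n) (\<lambda>t i. X n t i s - \<mu> n i) (\<gamma> n) i j w
                    - zeta_stat c n (l n) (\<lambda>t i. X n t i s - \<mu> n i) (\<gamma> n) i j w)
              \<le> B * (real (l n) ^ 2 * ln (real (card (\<I> n))) / real n))"
    (is "\<exists>B N. \<forall>n\<ge>N. ?bound B n")
  proof (intro exI[of _ B] exI[of _ "nat \<lceil>2 powr (1 / \<kappa>)\<rceil> + 1"] allI impI)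
    fix n assume n_large: "nat \<lceil>2 powr (1 / \<kappa>)\<rceil> + 1 \<le> n"
    then have "0 < n" "2 * l n \<le> n" using bw[of n] by auto
    have "2 powr (1 / \<kappa>) < real n"
      using n_large real_nat_ceiling_ge[of "2 powr (1 / \<kappa>)"] by linarith
    then have "2 < real n powr \<kappa>"
      using powr_less_mono2[OF kappa _ \<open>2 powr (1 / \<kappa>) < real n\<close>] kappa by (simp add: powr_powr)
    then have "2 \<le> real (card (\<I> n))" using rbig[of n] by linarith
    then have "finite (\<I> n)" using card_ge_0_finite by force
    have "\<kappa> * ln (real n) \<le> ln (real (card (\<I> n)))"
      using mult_ln_le_ln_of_powr_le \<open>0 < n\<close> rbig[of n] by simp
    from I_stat_minus_zeta_stat_log_bound[where X = "X n" and \<mu> = "\<mu> n" and \<gamma> = "\<gamma> n" and m = m,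
        OF P \<open>finite (\<I> n)\<close> Isub[of n] meas[where n = n] C1(3)[where n = n] C1(1) \<open>0 < C2\<close>
        mean_le[of _ n] cov_le[of _ n] \<open>0 \<le> G\<close> c \<open>0 < n\<close> \<open>2 * l n \<le> n\<close> \<open>0 < \<epsilon>\<close> kappa
        \<open>2 \<le> real (card (\<I> n))\<close> \<open>\<kappa> * ln (real n) \<le> ln (real (card (\<I> n)))\<close>]
    show "?bound B n"
      unfolding B_def by blast
  qed
qed

end
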